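(* Let $n>m\geq 1$ be integers and $\gamma>0$, and write the Taylor expansion of the squared magnitude of Budak's function as $|G^{\gamma}_{mn}(j\omega)|^2=1+c_1\omega^2+c_2\omega^4+O(\omega^6)$. Then: (i) $c_1=0$ if and only if $$\gamma=\frac{(2n-1)\pm\sqrt{(2n-1)(2m-1)}}{2(n-m)},$$ and both of these values satisfy $\gamma>1/2$; for all other $\gamma>0$ the amplitude approximation is maximally flat of order $1$. (ii) There is no $\gamma>0$ with $c_1=c_2=0$; hence the amplitude approximation given by $G^{\gamma}_{mn}$ is never maximally flat of order greater than $2$, and order $2$ is attained exactly for the values of $\gamma$ in (i).
   Context: Generalized Bessel polynomials: $B_n(s,\alpha,\beta)=\sum_{k=0}^{n}\binom{n}{k}\frac{(n+k+\alpha-2)^{(k)}}{\beta^k}s^{n-k}$, with $(q)^{(k)}=q(q-1)\cdots(q-k+1)$, $(q)^{(0)}=1$. Budak's function is $G^{\gamma}_{mn}(s)=K\,\frac{B_m(2(\gamma-1)s,2,1)}{B_n(2\gamma s,2,1)}$ with $K=\frac{B_n(0,2,1)}{B_m(0,2,1)}$, so $G^{\gamma}_{mn}(0)=1$. An amplitude approximation of unit amplitude is maximally flat of order $k$ if, apart from the constant term $1$, the Taylor expansion of $|H(j\omega)|^2$ about $\omega=0$ begins with the term in $\omega^{2k}$. *)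

theory Defs
  imports "HOL-Analysis.Analysis" "HOL-Library.Landau_Symbols"
begin

definition falling :: "real \<Rightarrow> nat \<Rightarrow> real" where
  "falling q k = (\<Prod>i<k. q - real i)"

definition genBessel :: "nat \<Rightarrow> complex \<Rightarrow> real \<Rightarrow> real \<Rightarrow> complex" where
  "genBessel n s \<alpha> \<beta> =
     (\<Sum>k\<le>n. of_nat (n choose k) * of_real (falling (real n + real k + \<alpha> - 2) k / \<beta> ^ k)
              * s ^ (n - k))"

definition budakG :: "real \<Rightarrow> nat \<Rightarrow> nat \<Rightarrow> complex \<Rightarrow> complex" where
  "budakG \<gamma> m n s =
     (genBessel n 0 2 1 / genBessel m 0 2 1) *
     (genBessel m (of_real (2 * (\<gamma> - 1)) * s) 2 1 / genBessel n (of_real (2 * \<gamma>) * s) 2 1)"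

definition max_flat :: "(complex \<Rightarrow> complex) \<Rightarrow> nat \<Rightarrow> bool" where
  "max_flat H k \<longleftrightarrow> (\<exists>c::real. c \<noteq> 0 \<and>
     (\<lambda>\<omega>::real. (cmod (H (\<i> * of_real \<omega>)))\<^sup>2 - 1 - c * \<omega> ^ (2 * k)) \<in> o[at 0](\<lambda>\<omega>. \<omega> ^ (2 * k)))"

end

theory Submission
  imports Defs
begin

text \<open>
  Normalised to constant term 1, the polynomial B_n(s,2,1) has the real coefficients
  a_j = n^(j) / (j! (2n)^(j)), and for every real polynomial
  |\<Sum> a_j (i\<omega>)^j|^2 = a_0^2 + (a_1^2 - 2 a_0 a_2) \<omega>^2 + (a_2^2 - 2 a_1 a_3 + 2 a_0 a_4) \<omega>^4 + O(\<omega>^6).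
  Dividing the expansions of numerator and denominator of G gives c_1 and c_2 explicitly.
  Then c_1 = 0 is the quadratic (\<gamma> - 1)^2 / (2m - 1) = \<gamma>^2 / (2n - 1), and on it
  c_2 = t^2 (n - m) / ((2m - 3)(2n - 3)) with t = \<gamma>^2 / (2n - 1) > 0, which never vanishes.
  The orders of maximal flatness follow from the uniqueness of the coefficients of \<omega>^2 and \<omega>^4.
\<close>

lemma eventually_nonzero_at_0: "eventually (\<lambda>\<omega>::real. \<omega> \<noteq> 0) (at 0)"
  by (simp add: eventually_at_filter)

lemma power_smallo_power_at_0:
  assumes "k < l"
  shows "(\<lambda>\<omega>::real. \<omega> ^ l) \<in> o[at 0](\<lambda>\<omega>. \<omega> ^ k)"
proof (rule smalloI_tendsto)
  have "((\<lambda>\<omega>::real. \<omega> ^ (l - k)) \<longlongrightarrow> 0) (at 0)"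
    using assms by (auto intro: tendsto_eq_intros)
  moreover have "eventually (\<lambda>\<omega>::real. \<omega> ^ (l - k) = \<omega> ^ l / \<omega> ^ k) (at 0)"
    using eventually_nonzero_at_0 by eventually_elim (use assms in \<open>simp add: power_diff\<close>)
  ultimately show "((\<lambda>\<omega>::real. \<omega> ^ l / \<omega> ^ k) \<longlongrightarrow> 0) (at 0)"
    by (rule Lim_transform_eventually)
  show "eventually (\<lambda>\<omega>::real. \<omega> ^ k \<noteq> 0) (at 0)"
    using eventually_nonzero_at_0 by eventually_elim simp
qed

lemma bigo_power_6_imp_smallo_power_4:
  "f \<in> O[at 0](\<lambda>\<omega>::real. \<omega> ^ 6) \<Longrightarrow> f \<in> o[at 0](\<lambda>\<omega>. \<omega> ^ 4)"
  using landau_o.big_small_trans power_smallo_power_at_0[of 4 6] by auto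

lemma even_quartic_smallo_imp_zero:
  fixes a b :: real
  assumes "(\<lambda>\<omega>. a * \<omega>\<^sup>2 + b * \<omega> ^ 4) \<in> o[at 0](\<lambda>\<omega>. \<omega> ^ 4)"
  shows "a = 0 \<and> b = 0"
proof -
  have "((\<lambda>\<omega>. \<omega>\<^sup>2 * ((a * \<omega>\<^sup>2 + b * \<omega> ^ 4) / \<omega> ^ 4)) \<longlongrightarrow> 0\<^sup>2 * 0) (at (0::real))"
    by (intro tendsto_intros smalloD_tendsto[OF assms])
  moreover have "eventually (\<lambda>\<omega>. \<omega>\<^sup>2 * ((a * \<omega>\<^sup>2 + b * \<omega> ^ 4) / \<omega> ^ 4) = a + b * \<omega>\<^sup>2) (at (0::real))"
    using eventually_nonzero_at_0 by eventually_elim (simp add: field_simps power2_eq_square power4_eq_xxxx)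
  ultimately have "((\<lambda>\<omega>::real. a + b * \<omega>\<^sup>2) \<longlongrightarrow> 0) (at 0)"
    by (simp add: tendsto_cong)
  moreover have "((\<lambda>\<omega>::real. a + b * \<omega>\<^sup>2) \<longlongrightarrow> a + b * 0\<^sup>2) (at 0)"
    by (intro tendsto_intros)
  ultimately have a: "a = 0"
    using tendsto_unique[OF at_neq_bot] by fastforce
  have "((\<lambda>\<omega>::real. (b * \<omega> ^ 4) / \<omega> ^ 4) \<longlongrightarrow> 0) (at 0)"
    using smalloD_tendsto[OF assms] by (simp add: a)
  moreover have "eventually (\<lambda>\<omega>::real. (b * \<omega> ^ 4) / \<omega> ^ 4 = b) (at 0)"
    using eventually_nonzero_at_0 by eventually_elim simp
  ultimately have "((\<lambda>_::real. b) \<longlongrightarrow> 0) (at 0)"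
    by (simp add: tendsto_cong)
  then show ?thesis using a by (simp add: tendsto_const_iff)
qed

lemma quartic_expansion_unique:
  fixes f :: "real \<Rightarrow> real"
  assumes "(\<lambda>\<omega>. f \<omega> - (1 + a1 * \<omega>\<^sup>2 + a2 * \<omega> ^ 4)) \<in> o[at 0](\<lambda>\<omega>. \<omega> ^ 4)"
    and "(\<lambda>\<omega>. f \<omega> - (1 + b1 * \<omega>\<^sup>2 + b2 * \<omega> ^ 4)) \<in> o[at 0](\<lambda>\<omega>. \<omega> ^ 4)"
  shows "a1 = b1 \<and> a2 = b2"
proof -
  have "(\<lambda>\<omega>. (f \<omega> - (1 + b1 * \<omega>\<^sup>2 + b2 * \<omega> ^ 4)) - (f \<omega> - (1 + a1 * \<omega>\<^sup>2 + a2 * \<omega> ^ 4)))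
          \<in> o[at 0](\<lambda>\<omega>. \<omega> ^ 4)"
    using assms(2,1) by (rule sum_in_smallo(2))
  then have "(\<lambda>\<omega>. (a1 - b1) * \<omega>\<^sup>2 + (a2 - b2) * \<omega> ^ 4) \<in> o[at 0](\<lambda>\<omega>. \<omega> ^ 4)"
    by (simp add: algebra_simps)
  then show ?thesis using even_quartic_smallo_imp_zero by force
qed

lemma max_flat_order_1:
  assumes "(\<lambda>\<omega>. (cmod (H (\<i> * of_real \<omega>)))\<^sup>2 - (1 + c1 * \<omega>\<^sup>2 + c2 * \<omega> ^ 4)) \<in> o[at 0](\<lambda>\<omega>. \<omega> ^ 4)"
    and "c1 \<noteq> 0"
  shows "max_flat H 1"
proof -
  have "(\<lambda>\<omega>. ((cmod (H (\<i> * of_real \<omega>)))\<^sup>2 - (1 + c1 * \<omega>\<^sup>2 + c2 * \<omega> ^ 4)) + c2 * \<omega> ^ 4)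
          \<in> o[at 0](\<lambda>\<omega>. \<omega> ^ (2 * 1))"
    using landau_o.small_trans[OF assms(1) power_smallo_power_at_0[of 2 4]]
      power_smallo_power_at_0[of 2 4]
    by (intro sum_in_smallo(1)) auto
  moreover have "(\<lambda>\<omega>. ((cmod (H (\<i> * of_real \<omega>)))\<^sup>2 - (1 + c1 * \<omega>\<^sup>2 + c2 * \<omega> ^ 4)) + c2 * \<omega> ^ 4)
      = (\<lambda>\<omega>. (cmod (H (\<i> * of_real \<omega>)))\<^sup>2 - 1 - c1 * \<omega> ^ (2 * 1))"
    by (simp add: fun_eq_iff)
  ultimately show ?thesis unfolding max_flat_def using assms(2) by auto
qed

lemma max_flat_order_2_iff:
  assumes "(\<lambda>\<omega>. (cmod (H (\<i> * of_real \<omega>)))\<^sup>2 - (1 + c1 * \<omega>\<^sup>2 + c2 * \<omega> ^ 4)) \<in> o[at 0](\<lambda>\<omega>. \<omega> ^ 4)"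
  shows "max_flat H 2 \<longleftrightarrow> c1 = 0 \<and> c2 \<noteq> 0"
proof
  assume "max_flat H 2"
  then obtain c where "c \<noteq> 0"
    and "(\<lambda>\<omega>. (cmod (H (\<i> * of_real \<omega>)))\<^sup>2 - (1 + 0 * \<omega>\<^sup>2 + c * \<omega> ^ 4)) \<in> o[at 0](\<lambda>\<omega>. \<omega> ^ 4)"
    unfolding max_flat_def by (auto simp: algebra_simps)
  with quartic_expansion_unique[OF assms] show "c1 = 0 \<and> c2 \<noteq> 0" by blast
next
  assume "c1 = 0 \<and> c2 \<noteq> 0"
  with assms show "max_flat H 2" unfolding max_flat_def by (auto simp: algebra_simps)
qed

lemma not_max_flat_order_gt_2:
  assumes "(\<lambda>\<omega>. (cmod (H (\<i> * of_real \<omega>)))\<^sup>2 - (1 + c1 * \<omega>\<^sup>2 + c2 * \<omega> ^ 4)) \<in> o[at 0](\<lambda>\<omega>. \<omega> ^ 4)"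
    and "c1 \<noteq> 0 \<or> c2 \<noteq> 0" and "k > 2"
  shows "\<not> max_flat H k"
proof
  assume "max_flat H k"
  then obtain c where
    rest: "(\<lambda>\<omega>. (cmod (H (\<i> * of_real \<omega>)))\<^sup>2 - 1 - c * \<omega> ^ (2 * k)) \<in> o[at 0](\<lambda>\<omega>. \<omega> ^ (2 * k))"
    unfolding max_flat_def by blast
  have "(\<lambda>\<omega>::real. \<omega> ^ (2 * k)) \<in> o[at 0](\<lambda>\<omega>. \<omega> ^ 4)"
    using \<open>k > 2\<close> by (intro power_smallo_power_at_0) simp
  then have "(\<lambda>\<omega>. ((cmod (H (\<i> * of_real \<omega>)))\<^sup>2 - 1 - c * \<omega> ^ (2 * k)) + c * \<omega> ^ (2 * k))
               \<in> o[at 0](\<lambda>\<omega>. \<omega> ^ 4)"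
    using landau_o.small_trans[OF rest] by (intro sum_in_smallo(1)) auto
  then have "(\<lambda>\<omega>. (cmod (H (\<i> * of_real \<omega>)))\<^sup>2 - (1 + 0 * \<omega>\<^sup>2 + 0 * \<omega> ^ 4)) \<in> o[at 0](\<lambda>\<omega>. \<omega> ^ 4)"
    by simp
  with quartic_expansion_unique[OF assms(1)] assms(2) show False by blast
qed

lemma isCont_times_power_bigo:
  assumes "isCont H 0"
  shows "(\<lambda>\<omega>::real. \<omega> ^ k * H \<omega>) \<in> O[at 0](\<lambda>\<omega>. \<omega> ^ k)"
proof -
  have "H \<in> O[at 0](\<lambda>_. 1)"
    using assms by (intro bigoI_tendsto[where c = "H 0"]) (auto simp: isCont_def)
  from landau_o.big.mult[OF landau_o.big_refl this] show ?thesis by simp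
qed

lemma bigo_power_6_imp_tendsto_0:
  assumes "f \<in> O[at 0](\<lambda>\<omega>::real. \<omega> ^ 6)"
  shows "(f \<longlongrightarrow> 0) (at 0)"
proof -
  have "f \<in> o[at 0](\<lambda>_. 1)"
    using landau_o.big_small_trans[OF assms power_smallo_power_at_0[of 0 6]] by simp
  from smalloD_tendsto[OF this] show ?thesis by simp
qed

lemma quartic_expansion_divide:
  fixes P Q :: "real \<Rightarrow> real"
  assumes P: "(\<lambda>\<omega>. P \<omega> - (1 + a1 * \<omega>\<^sup>2 + a2 * \<omega> ^ 4)) \<in> O[at 0](\<lambda>\<omega>. \<omega> ^ 6)"
    and Q: "(\<lambda>\<omega>. Q \<omega> - (1 + b1 * \<omega>\<^sup>2 + b2 * \<omega> ^ 4)) \<in> O[at 0](\<lambda>\<omega>. \<omega> ^ 6)"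
  defines "c1 \<equiv> a1 - b1" and "c2 \<equiv> a2 - b2 - b1 * (a1 - b1)"
  shows "(\<lambda>\<omega>. P \<omega> / Q \<omega> - (1 + c1 * \<omega>\<^sup>2 + c2 * \<omega> ^ 4)) \<in> O[at 0](\<lambda>\<omega>. \<omega> ^ 6)"
proof -
  define R where "R \<omega> = 1 + c1 * \<omega>\<^sup>2 + c2 * \<omega> ^ 4" for \<omega> :: real
  have "((\<lambda>\<omega>. (Q \<omega> - (1 + b1 * \<omega>\<^sup>2 + b2 * \<omega> ^ 4)) + (1 + b1 * \<omega>\<^sup>2 + b2 * \<omega> ^ 4)) \<longlongrightarrow>
          0 + (1 + b1 * 0\<^sup>2 + b2 * 0 ^ 4)) (at 0)"
    by (intro tendsto_intros bigo_power_6_imp_tendsto_0[OF Q])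
  then have Q_lim: "(Q \<longlongrightarrow> 1) (at 0)" by simp
  then have "(\<lambda>\<omega>. 1 / Q \<omega>) \<in> O[at 0](\<lambda>_. 1)"
    by (intro bigoI_tendsto[where c = 1]) (auto intro: tendsto_eq_intros)
  moreover have "(\<lambda>\<omega>. P \<omega> - R \<omega> * Q \<omega>) \<in> O[at 0](\<lambda>\<omega>. \<omega> ^ 6)"
  proof -
    have "R \<in> O[at 0](\<lambda>_. 1)"
      unfolding R_def by (intro bigoI_tendsto[where c = 1]) (auto intro!: tendsto_eq_intros)
    from landau_o.big.mult[OF this Q]
    have RQ: "(\<lambda>\<omega>. R \<omega> * (Q \<omega> - (1 + b1 * \<omega>\<^sup>2 + b2 * \<omega> ^ 4))) \<in> O[at 0](\<lambda>\<omega>. \<omega> ^ 6)"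
      by simp
    \<comment> \<open>\<open>c1\<close> and \<open>c2\<close> are chosen so that the \<open>\<omega>\<^sup>2\<close> and \<open>\<omega>\<^sup>4\<close> terms of \<open>P - R * Q\<close> cancel\<close>
    have "(\<lambda>\<omega>. \<omega> ^ 6 * (- c1 * b2 - c2 * b1 - c2 * b2 * \<omega>\<^sup>2)) \<in> O[at 0](\<lambda>\<omega>. \<omega> ^ 6)"
      by (intro isCont_times_power_bigo continuous_intros)
    from sum_in_bigo(1)[OF sum_in_bigo(2)[OF P RQ] this]
    show ?thesis
      by (simp add: R_def c1_def c2_def algebra_simps power2_eq_square power_numeral_reduce)
  qed
  ultimately have "(\<lambda>\<omega>. (P \<omega> - R \<omega> * Q \<omega>) * (1 / Q \<omega>)) \<in> O[at 0](\<lambda>\<omega>. \<omega> ^ 6)"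
    using landau_o.big.mult by fastforce
  moreover have "eventually (\<lambda>\<omega>. (P \<omega> - R \<omega> * Q \<omega>) * (1 / Q \<omega>) = P \<omega> / Q \<omega> - R \<omega>) (at 0)"
    using order_tendstoD(1)[OF Q_lim zero_less_one] by eventually_elim (simp add: field_simps)
  ultimately show ?thesis unfolding R_def by (simp add: landau_o.big.in_cong)
qed

lemma cmod_real_poly_imag_expansion:
  fixes A :: "nat \<Rightarrow> real"
  assumes "\<forall>j>N. A j = 0"
  shows "(\<lambda>\<omega>. (cmod (\<Sum>j\<le>N. of_real (A j) * (\<i> * of_real \<omega>) ^ j))\<^sup>2
            - ((A 0)\<^sup>2 + ((A 1)\<^sup>2 - 2 * A 0 * A 2) * \<omega>\<^sup>2 + ((A 2)\<^sup>2 - 2 * A 1 * A 3 + 2 * A 0 * A 4) * \<omega> ^ 4))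
         \<in> O[at 0](\<lambda>\<omega>. \<omega> ^ 6)"
proof -
  define F where "F j \<omega> = complex_of_real (A j) * (\<i> * complex_of_real \<omega>) ^ j" for j \<omega>
  define g where "g \<omega> = (\<Sum>j\<in>{6..<N+6}. complex_of_real (A j) * \<i> ^ j * complex_of_real \<omega> ^ (j - 6))" for \<omega>
  define p where "p \<omega> = A 0 - A 2 * \<omega>\<^sup>2 + A 4 * \<omega> ^ 4" for \<omega>
  define q where "q \<omega> = A 1 * \<omega> - A 3 * \<omega> ^ 3 + A 5 * \<omega> ^ 5" for \<omega>
  have split: "(\<Sum>j\<le>N. F j \<omega>) = Complex (p \<omega>) (q \<omega>) + complex_of_real (\<omega> ^ 6) * g \<omega>" for \<omega>
  proof -
    have "(\<Sum>j\<le>N. F j \<omega>) = (\<Sum>j\<in>{0..<N+6}. F j \<omega>)"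
      by (rule sum.mono_neutral_left) (auto simp: F_def assms)
    also have "\<dots> = (\<Sum>j\<in>{0..<6}. F j \<omega>) + (\<Sum>j\<in>{6..<N+6}. F j \<omega>)"
      by (simp add: sum.atLeastLessThan_concat)
    also have "(\<Sum>j\<in>{0..<6}. F j \<omega>) = Complex (p \<omega>) (q \<omega>)"
      by (simp add: F_def p_def q_def numeral_eq_Suc atLeast0_lessThan_Suc power_mult_distrib
          complex_eq_iff power2_eq_square)
    also have "(\<Sum>j\<in>{6..<N+6}. F j \<omega>) = complex_of_real (\<omega> ^ 6) * g \<omega>"
    proof -
      have "F j \<omega> = complex_of_real (\<omega> ^ 6) * (complex_of_real (A j) * \<i> ^ j * complex_of_real \<omega> ^ (j - 6))"
        if "6 \<le> j" for j
      proof -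
        have "complex_of_real \<omega> ^ j = complex_of_real \<omega> ^ 6 * complex_of_real \<omega> ^ (j - 6)"
          using that by (simp flip: power_add)
        then show ?thesis by (simp add: F_def power_mult_distrib)
      qed
      then show ?thesis unfolding g_def sum_distrib_left by (intro sum.cong) auto
    qed
    finally show ?thesis .
  qed
  define H where "H \<omega> = (A 3)\<^sup>2 - 2 * A 2 * A 4 + 2 * A 1 * A 5 + ((A 4)\<^sup>2 - 2 * A 3 * A 5) * \<omega>\<^sup>2
      + (A 5)\<^sup>2 * \<omega> ^ 4 + 2 * p \<omega> * Re (g \<omega>) + 2 * q \<omega> * Im (g \<omega>) + \<omega> ^ 6 * (cmod (g \<omega>))\<^sup>2" for \<omega>
  have "isCont g 0" unfolding g_def by (intro continuous_intros)
  then have "isCont H 0" unfolding H_def p_def q_def by (auto intro!: continuous_intros)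
  then have "(\<lambda>\<omega>. \<omega> ^ 6 * H \<omega>) \<in> O[at 0](\<lambda>\<omega>. \<omega> ^ 6)" by (rule isCont_times_power_bigo)
  moreover have "(cmod (\<Sum>j\<le>N. F j \<omega>))\<^sup>2
      = (A 0)\<^sup>2 + ((A 1)\<^sup>2 - 2 * A 0 * A 2) * \<omega>\<^sup>2 + ((A 2)\<^sup>2 - 2 * A 1 * A 3 + 2 * A 0 * A 4) * \<omega> ^ 4
        + \<omega> ^ 6 * H \<omega>" for \<omega>
    unfolding split cmod_power2 H_def p_def q_def by (simp add: power2_eq_square) algebra
  ultimately show ?thesis unfolding F_def by simp
qed

lemma falling_add: "falling q (j + k) = falling q j * falling (q - real j) k"
  by (induction k) (simp_all add: falling_def algebra_simps)

lemma falling_pos: "real k \<le> q \<Longrightarrow> 0 < falling q k"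
  unfolding falling_def by (intro prod_pos) auto

lemma falling_nat_eq_0: "n < k \<Longrightarrow> falling (real n) k = 0"
  unfolding falling_def by (intro prod_zero) (auto intro!: bexI[of _ n])

lemma binomial_eq_falling: "real (n choose k) = falling (real n) k / fact k"
  by (simp add: falling_def binomial_gbinomial gbinomial_prod_rev atLeast0LessThan)

definition bessel_coeff :: "nat \<Rightarrow> nat \<Rightarrow> real" where
  "bessel_coeff n j = falling (real n) j / (fact j * falling (2 * real n) j)"

definition bessel_normalized :: "nat \<Rightarrow> complex \<Rightarrow> complex" where
  "bessel_normalized n s = (\<Sum>j\<le>n. of_real (bessel_coeff n j) * s ^ j)"

lemma genBessel_eq_bessel_normalized:
  "genBessel n s 2 1 = of_real (falling (2 * real n) n) * bessel_normalized n s"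
proof -
  have coeff: "real (n choose j) * falling (2 * real n - real j) (n - j) = falling (2 * real n) n * bessel_coeff n j"
    if "j \<le> n" for j
  proof -
    have "falling (2 * real n) n = falling (2 * real n) j * falling (2 * real n - real j) (n - j)"
      using falling_add[of "2 * real n" j "n - j"] that by simp
    moreover have "falling (2 * real n) j > 0" using that by (intro falling_pos) simp
    ultimately show ?thesis unfolding bessel_coeff_def binomial_eq_falling by (simp add: field_simps)
  qed
  have "genBessel n s 2 1 = (\<Sum>k\<le>n. of_nat (n choose k) * of_real (falling (real n + real k) k) * s ^ (n - k))"
    unfolding genBessel_def by simp
  also have "\<dots> = (\<Sum>j\<le>n. of_nat (n choose (n - j)) * of_real (falling (real n + real (n - j)) (n - j)) * s ^ (n - (n - j)))"
    by (rule sum.reindex_bij_witness[of _ "\<lambda>j. n - j" "\<lambda>j. n - j"]) auto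
  also have "\<dots> = (\<Sum>j\<le>n. of_real (real (n choose j) * falling (2 * real n - real j) (n - j)) * s ^ j)"
    by (rule sum.cong) (auto simp: binomial_symmetric[symmetric] of_nat_diff)
  also have "\<dots> = of_real (falling (2 * real n) n) * bessel_normalized n s"
    unfolding bessel_normalized_def sum_distrib_left by (rule sum.cong) (simp_all add: coeff)
  finally show ?thesis .
qed

lemma bessel_coeff_0 [simp]: "bessel_coeff n 0 = 1"
  by (simp add: bessel_coeff_def falling_def)

lemma bessel_normalized_0 [simp]: "bessel_normalized n 0 = 1"
proof -
  have "bessel_normalized n 0 = (\<Sum>j\<in>{0}. of_real (bessel_coeff n j) * 0 ^ j)"
    unfolding bessel_normalized_def by (rule sum.mono_neutral_right) auto
  then show ?thesis by simp
qed

lemma budakG_eq_bessel_normalized: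
  "budakG \<gamma> m n s = bessel_normalized m (of_real (2 * (\<gamma> - 1)) * s) / bessel_normalized n (of_real (2 * \<gamma>) * s)"
proof -
  have "falling (2 * real m) m > 0" "falling (2 * real n) n > 0" by (simp_all add: falling_pos)
  then show ?thesis
    unfolding budakG_def genBessel_eq_bessel_normalized by (simp add: field_simps)
qed

lemma bessel_coeff_quadratic:
  "1 \<le> n \<Longrightarrow> (bessel_coeff n 1)\<^sup>2 - 2 * bessel_coeff n 2 = 1 / (4 * (2 * real n - 1))"
  unfolding bessel_coeff_def falling_def by (simp add: numeral_eq_Suc lessThan_Suc field_simps)

lemma bessel_coeff_quartic:
  assumes "1 \<le> n"
  shows "(bessel_coeff n 2)\<^sup>2 - 2 * bessel_coeff n 1 * bessel_coeff n 3 + 2 * bessel_coeff n 4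
         = (real n - 1) / (16 * (2 * real n - 1)\<^sup>2 * (2 * real n - 3))"
proof (cases "n = 1")
  case True
  then show ?thesis unfolding bessel_coeff_def falling_def by (simp add: numeral_eq_Suc lessThan_Suc)
next
  case False
  with assms have "real n \<ge> 2" by simp
  then have "2 * real n - 1 \<noteq> 0" "2 * real n - 2 \<noteq> 0" "2 * real n - 3 \<noteq> 0" "real n \<noteq> 0" by auto
  then show ?thesis unfolding bessel_coeff_def falling_def
    by (simp add: numeral_eq_Suc lessThan_Suc divide_simps)
       (simp add: algebra_simps power2_eq_square power_numeral_reduce)
qed

lemma bessel_normalized_expansion:
  assumes "1 \<le> n"
  shows "(\<lambda>\<omega>. (cmod (bessel_normalized n (of_real y * (\<i> * of_real \<omega>))))\<^sup>2
            - (1 + y\<^sup>2 / (4 * (2 * real n - 1)) * \<omega>\<^sup>2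
                 + y ^ 4 * (real n - 1) / (16 * (2 * real n - 1)\<^sup>2 * (2 * real n - 3)) * \<omega> ^ 4))
         \<in> O[at 0](\<lambda>\<omega>. \<omega> ^ 6)"
proof -
  define A where "A j = bessel_coeff n j * y ^ j" for j
  have "\<forall>j>n. A j = 0" by (simp add: A_def bessel_coeff_def falling_nat_eq_0)
  note expansion = cmod_real_poly_imag_expansion[OF this]
  have "bessel_normalized n (of_real y * (\<i> * of_real \<omega>)) = (\<Sum>j\<le>n. of_real (A j) * (\<i> * of_real \<omega>) ^ j)"
    for \<omega>
    unfolding bessel_normalized_def A_def by (simp add: power_mult_distrib mult_ac)
  moreover have "A 0 = 1" by (simp add: A_def)
  moreover have "(A 1)\<^sup>2 - 2 * A 0 * A 2 = y\<^sup>2 / (4 * (2 * real n - 1))"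
  proof -
    have "(A 1)\<^sup>2 - 2 * A 0 * A 2 = ((bessel_coeff n 1)\<^sup>2 - 2 * bessel_coeff n 2) * y\<^sup>2"
      by (simp add: A_def power2_eq_square algebra_simps)
    then show ?thesis using bessel_coeff_quadratic[OF assms] by simp
  qed
  moreover have "(A 2)\<^sup>2 - 2 * A 1 * A 3 + 2 * A 0 * A 4
      = y ^ 4 * (real n - 1) / (16 * (2 * real n - 1)\<^sup>2 * (2 * real n - 3))"
  proof -
    have "(A 2)\<^sup>2 - 2 * A 1 * A 3 + 2 * A 0 * A 4
        = ((bessel_coeff n 2)\<^sup>2 - 2 * bessel_coeff n 1 * bessel_coeff n 3 + 2 * bessel_coeff n 4) * y ^ 4"
      by (simp add: A_def power2_eq_square power_numeral_reduce algebra_simps)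
    then show ?thesis using bessel_coeff_quartic[OF assms] by simp
  qed
  ultimately show ?thesis using expansion by simp
qed

definition budak_c1 :: "real \<Rightarrow> nat \<Rightarrow> nat \<Rightarrow> real" where
  "budak_c1 \<gamma> m n = (\<gamma> - 1)\<^sup>2 / (2 * real m - 1) - \<gamma>\<^sup>2 / (2 * real n - 1)"

definition budak_c2 :: "real \<Rightarrow> nat \<Rightarrow> nat \<Rightarrow> real" where
  "budak_c2 \<gamma> m n =
     (\<gamma> - 1) ^ 4 * (real m - 1) / ((2 * real m - 1)\<^sup>2 * (2 * real m - 3))
     - \<gamma> ^ 4 * (real n - 1) / ((2 * real n - 1)\<^sup>2 * (2 * real n - 3))
     - \<gamma>\<^sup>2 / (2 * real n - 1) * budak_c1 \<gamma> m n"

lemma budakG_expansion: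
  assumes "1 \<le> m" and "1 \<le> n"
  shows "(\<lambda>\<omega>. (cmod (budakG \<gamma> m n (\<i> * of_real \<omega>)))\<^sup>2
            - (1 + budak_c1 \<gamma> m n * \<omega>\<^sup>2 + budak_c2 \<gamma> m n * \<omega> ^ 4)) \<in> O[at 0](\<lambda>\<omega>. \<omega> ^ 6)"
proof -
  have norm_eq: "(cmod (bessel_normalized m (of_real (2 * (\<gamma> - 1)) * (\<i> * of_real \<omega>))))\<^sup>2
        / (cmod (bessel_normalized n (of_real (2 * \<gamma>) * (\<i> * of_real \<omega>))))\<^sup>2
      = (cmod (budakG \<gamma> m n (\<i> * of_real \<omega>)))\<^sup>2" for \<omega>
    by (simp add: budakG_eq_bessel_normalized norm_divide power_divide)
  have scale: "(2 * x)\<^sup>2 / (4 * d) = x\<^sup>2 / d"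
      "(2 * x) ^ 4 * e / (16 * d1 * d2) = x ^ 4 * e / (d1 * d2)" for x d d1 d2 e :: real
    by (simp_all add: power_mult_distrib)
  have c1_eq: "(2 * (\<gamma> - 1))\<^sup>2 / (4 * (2 * real m - 1)) - (2 * \<gamma>)\<^sup>2 / (4 * (2 * real n - 1))
      = budak_c1 \<gamma> m n"
    unfolding budak_c1_def by (simp only: scale)
  have c2_eq: "(2 * (\<gamma> - 1)) ^ 4 * (real m - 1) / (16 * (2 * real m - 1)\<^sup>2 * (2 * real m - 3))
      - (2 * \<gamma>) ^ 4 * (real n - 1) / (16 * (2 * real n - 1)\<^sup>2 * (2 * real n - 3))
      - (2 * \<gamma>)\<^sup>2 / (4 * (2 * real n - 1)) * budak_c1 \<gamma> m n = budak_c2 \<gamma> m n"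
    unfolding budak_c2_def by (simp only: scale)
  show ?thesis
    using quartic_expansion_divide[OF bessel_normalized_expansion[OF assms(1), of "2 * (\<gamma> - 1)"]
        bessel_normalized_expansion[OF assms(2), of "2 * \<gamma>"]]
    unfolding norm_eq c1_eq c2_eq .
qed

lemma shifted_square_ratio_eq_iff:
  fixes a b g :: real
  assumes "0 < b" and "b < a"
  shows "(g - 1)\<^sup>2 / b = g\<^sup>2 / a \<longleftrightarrow>
         g = (a + sqrt (a * b)) / (a - b) \<or> g = (a - sqrt (a * b)) / (a - b)"
proof -
  define S where "S = sqrt (a * b)"
  have SS: "S * S = a * b" unfolding S_def using assms by simp
  have "(g - 1)\<^sup>2 / b = g\<^sup>2 / a \<longleftrightarrow> (g - 1)\<^sup>2 * a - g\<^sup>2 * b = 0"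
    using assms by (simp add: field_simps)
  also have "(g - 1)\<^sup>2 * a - g\<^sup>2 * b = ((a - b) * g - (a + S)) * ((a - b) * g - (a - S)) / (a - b)"
    using assms SS by (simp add: field_simps power2_eq_square)
  also have "\<dots> = 0 \<longleftrightarrow> (a - b) * g = a + S \<or> (a - b) * g = a - S"
    using assms by simp
  also have "\<dots> \<longleftrightarrow> g = (a + S) / (a - b) \<or> g = (a - S) / (a - b)"
    using assms by (simp add: field_simps)
  finally show ?thesis unfolding S_def .
qed

lemma shifted_square_roots_gt_half:
  fixes a b :: real
  assumes "0 < b" and "b < a"
  shows "(a + sqrt (a * b)) / (a - b) > 1 / 2" and "(a - sqrt (a * b)) / (a - b) > 1 / 2"
proof -
  have "((a + b) / 2)\<^sup>2 - a * b = ((a - b) / 2)\<^sup>2"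
    by (simp add: power2_eq_square field_simps)
  moreover have "((a - b) / 2)\<^sup>2 > 0" using assms by simp
  ultimately have "a * b < ((a + b) / 2)\<^sup>2" by linarith
  then have "sqrt (a * b) < (a + b) / 2"
    using assms real_sqrt_less_iff[of "a * b" "((a + b) / 2)\<^sup>2"] by simp
  then show "(a - sqrt (a * b)) / (a - b) > 1 / 2" using assms by (simp add: field_simps)
  show "(a + sqrt (a * b)) / (a - b) > 1 / 2"
    using assms by (simp add: field_simps) (simp add: add_pos_nonneg)
qed

lemma budak_c1_eq_0_iff:
  assumes "1 \<le> m" and "m < n"
  shows "budak_c1 \<gamma> m n = 0 \<longleftrightarrow>
    \<gamma> = ((2 * real n - 1) + sqrt ((2 * real n - 1) * (2 * real m - 1))) / (2 * (real n - real m)) \<or>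
    \<gamma> = ((2 * real n - 1) - sqrt ((2 * real n - 1) * (2 * real m - 1))) / (2 * (real n - real m))"
proof -
  have "2 * (real n - real m) = (2 * real n - 1) - (2 * real m - 1)" by simp
  then show ?thesis
    using shifted_square_ratio_eq_iff[of "2 * real m - 1" "2 * real n - 1" \<gamma>] assms
    unfolding budak_c1_def by simp
qed

lemma two_times_nat_minus_3_neq_0: "2 * real k - 3 \<noteq> 0"
proof
  assume "2 * real k - 3 = 0"
  then have "2 * k = 3" by linarith
  then show False by presburger
qed

lemma budak_c2_neq_0:
  assumes "1 \<le> m" and "m < n" and "\<gamma> \<noteq> 0" and "budak_c1 \<gamma> m n = 0"
  shows "budak_c2 \<gamma> m n \<noteq> 0"
proof -
  define t where "t = \<gamma>\<^sup>2 / (2 * real n - 1)"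
  have "t > 0" unfolding t_def using assms by simp
  have "(\<gamma> - 1)\<^sup>2 / (2 * real m - 1) = t" using assms(4) unfolding budak_c1_def t_def by simp
  have square: "x ^ 4 * e / (d\<^sup>2 * f) = (x\<^sup>2 / d)\<^sup>2 * (e / f)" for x d e f :: real
    by (simp add: power2_eq_square power4_eq_xxxx mult_ac)
  have "budak_c2 \<gamma> m n = t\<^sup>2 * ((real m - 1) / (2 * real m - 3) - (real n - 1) / (2 * real n - 3))"
    unfolding budak_c2_def assms(4) square \<open>(\<gamma> - 1)\<^sup>2 / (2 * real m - 1) = t\<close> t_def[symmetric]
    by (simp add: right_diff_distrib)
  also have "(real m - 1) / (2 * real m - 3) - (real n - 1) / (2 * real n - 3)
      = (real n - real m) / ((2 * real m - 3) * (2 * real n - 3))"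
    using two_times_nat_minus_3_neq_0[of m] two_times_nat_minus_3_neq_0[of n]
    by (simp add: field_simps)
  finally show ?thesis
    using \<open>t > 0\<close> assms two_times_nat_minus_3_neq_0[of m] two_times_nat_minus_3_neq_0[of n] by simp
qed

theorem mainTheorem7:
  fixes m n :: nat and \<gamma> c1 c2 :: real
  assumes "1 \<le> m" and "m < n" and "\<gamma> > 0"
    and taylor: "(\<lambda>\<omega>::real. (cmod (budakG \<gamma> m n (\<i> * of_real \<omega>)))\<^sup>2
                   - (1 + c1 * \<omega>\<^sup>2 + c2 * \<omega> ^ 4)) \<in> O[at 0](\<lambda>\<omega>. \<omega> ^ 6)"
  defines "\<gamma>p \<equiv> ((2 * real n - 1) + sqrt ((2 * real n - 1) * (2 * real m - 1))) / (2 * (real n - real m))"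
    and "\<gamma>m \<equiv> ((2 * real n - 1) - sqrt ((2 * real n - 1) * (2 * real m - 1))) / (2 * (real n - real m))"
  shows "(c1 = 0 \<longleftrightarrow> (\<gamma> = \<gamma>p \<or> \<gamma> = \<gamma>m))
       \<and> \<gamma>p > 1/2 \<and> \<gamma>m > 1/2
       \<and> (c1 \<noteq> 0 \<longrightarrow> max_flat (budakG \<gamma> m n) 1)
       \<and> \<not> (c1 = 0 \<and> c2 = 0)
       \<and> (\<forall>k>2. \<not> max_flat (budakG \<gamma> m n) k)
       \<and> (max_flat (budakG \<gamma> m n) 2 \<longleftrightarrow> (\<gamma> = \<gamma>p \<or> \<gamma> = \<gamma>m))"
proof -
  have taylor4: "(\<lambda>\<omega>. (cmod (budakG \<gamma> m n (\<i> * of_real \<omega>)))\<^sup>2 - (1 + c1 * \<omega>\<^sup>2 + c2 * \<omega> ^ 4))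
      \<in> o[at 0](\<lambda>\<omega>. \<omega> ^ 4)"
    using bigo_power_6_imp_smallo_power_4[OF taylor] .
  have "c1 = budak_c1 \<gamma> m n \<and> c2 = budak_c2 \<gamma> m n"
    using assms budakG_expansion[of m n \<gamma>]
    by (intro quartic_expansion_unique[OF taylor4] bigo_power_6_imp_smallo_power_4) auto
  then have c1: "c1 = budak_c1 \<gamma> m n" and c2: "c2 = budak_c2 \<gamma> m n" by auto
  have roots: "c1 = 0 \<longleftrightarrow> \<gamma> = \<gamma>p \<or> \<gamma> = \<gamma>m"
    unfolding c1 \<gamma>p_def \<gamma>m_def by (rule budak_c1_eq_0_iff[OF assms(1,2)])
  have not_flat: "\<not> (c1 = 0 \<and> c2 = 0)"
    using budak_c2_neq_0[OF assms(1,2)] assms(3) unfolding c1 c2 by auto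
  have "2 * (real n - real m) = (2 * real n - 1) - (2 * real m - 1)" by simp
  then have "\<gamma>p > 1/2 \<and> \<gamma>m > 1/2"
    using shifted_square_roots_gt_half[of "2 * real m - 1" "2 * real n - 1"] assms
    unfolding \<gamma>p_def \<gamma>m_def by simp
  then show ?thesis
    using roots not_flat max_flat_order_1[OF taylor4] max_flat_order_2_iff[OF taylor4]
      not_max_flat_order_gt_2[OF taylor4]
    by auto
qed

end
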